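(* For any odd $b\geq1$ and any $n>b$, the set $R_n^*(b)$ listed in $\prec$ order (increasing) is a $5$-Gray code: any two consecutive sequences in the list differ in at most $5$ positions.
   Context: A restricted growth function of length $n$ is an integer sequence $s_1\ldots s_n$ with $s_1=0$ and $0\leq s_{i+1}\leq \max\{s_j\}_{j=1}^i+1$ for $1\leq i\leq n-1$; $R_n$ is the set of these. For an integer $b\geq1$, $R^*_n(b)=\{s_1\ldots s_n\in R_n: \max_i s_i= b\}$. The Reflected Gray Code Order $\prec$ on length-$n$ sequences of nonnegative integers: $s_1\ldots s_n\prec t_1\ldots t_n$ if, for the smallest $k$ with $s_k\neq t_k$, either $\sum_{i=1}^{k-1}s_i$ is even and $s_k<t_k$, or $\sum_{i=1}^{k-1}s_i$ is odd and $s_k>t_k$. A list of same-length sequences is a $d$-Gray code if the Hamming distance (number of differing positions) between successive sequences is at most $d$. *)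

theory Defs
  imports Main
begin

text \<open>Sequences s_1 ... s_n are represented as lists of naturals of length n,
  with 0-based indexing: s_i is s ! (i - 1).\<close>

definition rgf :: "nat \<Rightarrow> nat list \<Rightarrow> bool" where
  "rgf n s \<longleftrightarrow> length s = n \<and> (n \<ge> 1 \<longrightarrow> s ! 0 = 0) \<and>
     (\<forall>i. i + 1 < n \<longrightarrow> s ! (i + 1) \<le> Max {s ! j | j. j \<le> i} + 1)"

definition R :: "nat \<Rightarrow> nat list set" where
  "R n = {s. rgf n s}"

definition Rstar :: "nat \<Rightarrow> nat \<Rightarrow> nat list set" where
  "Rstar n b = {s \<in> R n. Max (set s) = b}"

definition rgc_less :: "nat list \<Rightarrow> nat list \<Rightarrow> bool" where
  "rgc_less s t \<longleftrightarrow> length s = length t \<and>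
     (\<exists>k < length s. take k s = take k t \<and> s ! k \<noteq> t ! k \<and>
        ((even (sum_list (take k s)) \<and> s ! k < t ! k) \<or>
         (odd (sum_list (take k s)) \<and> s ! k > t ! k)))"

definition hamming :: "nat list \<Rightarrow> nat list \<Rightarrow> nat" where
  "hamming s t = card {i. i < length s \<and> s ! i \<noteq> t ! i}"

end

theory Submission
  imports Defs
begin

text \<open>Let \<open>s \<prec> t\<close> be consecutive in \<open>R\<^sup>*\<^sub>n(b)\<close> and let \<open>x \<noteq> y\<close> be their entries at the first
  position where they differ. After a common prefix, the order on the admissible tails is again the
  reflected Gray code order, reversed exactly when the prefix sum is odd. If \<open>x\<close> and \<open>y\<close> were not
  adjacent values, or if the tail of \<open>t\<close> were not the first admissible tail after \<open>y\<close>, or the tail of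
  \<open>s\<close> not the last one after \<open>x\<close>, a sequence strictly between \<open>s\<close> and \<open>t\<close> could be built.
  The first tail is explicit: in the unreversed order it is a block of zeros followed by the run
  \<open>m + 1, \<dots>, b\<close> from the current maximum \<open>m\<close> up to \<open>b\<close>; in the reversed order it first climbs to an odd new
  maximum and then continues in the same way. For adjacent heads \<open>a\<close>, \<open>a + 1\<close> these explicit tails
  differ in at most four places (here the oddness of \<open>b\<close> is used), which together with the first
  difference gives the bound 5.\<close>

text \<open>\<open>rg_tail b m w\<close>: \<open>w\<close> may follow a restricted growth prefix with maximum \<open>m\<close>, and the
  whole sequence then has maximum \<open>b\<close>.\<close>

fun rg_tail :: "nat \<Rightarrow> nat \<Rightarrow> nat list \<Rightarrow> bool" where
  "rg_tail b m [] \<longleftrightarrow> m = b"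
| "rg_tail b m (x # w) \<longleftrightarrow> x \<le> Suc m \<and> rg_tail b (max m x) w"

definition rg_tails :: "nat \<Rightarrow> nat \<Rightarrow> nat \<Rightarrow> nat list set" where
  "rg_tails b m r = {w. length w = r \<and> rg_tail b m w}"

lemma Nil_mem_rg_tails [simp]: "[] \<in> rg_tails b m r \<longleftrightarrow> r = 0 \<and> m = b"
  by (auto simp: rg_tails_def)

lemma Cons_mem_rg_tails [simp]:
  "x # w \<in> rg_tails b m r \<longleftrightarrow> r \<noteq> 0 \<and> x \<le> Suc m \<and> w \<in> rg_tails b (max m x) (r - 1)"
  by (auto simp: rg_tails_def)

lemma rg_tails_bounds: "w \<in> rg_tails b m r \<Longrightarrow> m \<le> b \<and> b - m \<le> r"
proof (induction w arbitrary: m r)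
  case (Cons x w)
  then have "x \<le> Suc m" "r \<noteq> 0" "w \<in> rg_tails b (max m x) (r - 1)" by simp_all
  with Cons.IH show ?case by fastforce
qed simp

lemma Max_insert_insert:
  "finite A \<Longrightarrow> Max (insert m (insert x A)) = Max (insert (max m x) (A :: 'a::linorder set))"
  by (cases "A = {}") (auto simp: max.assoc)

lemma rg_tail_iff:
  "rg_tail b m w \<longleftrightarrow>
     (\<forall>i < length w. w ! i \<le> Suc (Max (insert m (set (take i w))))) \<and> Max (insert m (set w)) = b"
proof (induction w arbitrary: m)
  case (Cons x w)
  have prefix_Max: "Max (insert m (set (take (Suc i) (x # w)))) = Max (insert (max m x) (set (take i w)))"
    for i using Max_insert_insert[of "set (take i w)" m x] by simp
  have "(\<forall>i < length (x # w). (x # w) ! i \<le> Suc (Max (insert m (set (take i (x # w)))))) \<longleftrightarrow>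
      x \<le> Suc m \<and> (\<forall>i < length w. w ! i \<le> Suc (Max (insert (max m x) (set (take i w)))))"
    unfolding length_Cons All_less_Suc2 prefix_Max by simp
  then show ?case
    using Cons.IH[of "max m x"] Max_insert_insert[of "set w" m x] by simp
qed simp

lemma prefix_values_Cons:
  assumes "i \<le> length w"
  shows "{(x # w) ! j | j. j \<le> i} = insert x (set (take i w))"
proof -
  have "{(x # w) ! j | j. j \<le> i} = insert x {w ! j | j. j < i}"
    by (auto simp: le_Suc_eq nth_Cons' split: nat.splits)
  also have "{w ! j | j. j < i} = set (take i w)"
    unfolding nth_image[OF assms, symmetric] by auto
  finally show ?thesis .
qed

lemma rgf_Cons_iff:
  "rgf (Suc k) (x # w) \<longleftrightarrow>
     x = 0 \<and> length w = k \<and> (\<forall>i < length w. w ! i \<le> Suc (Max (insert x (set (take i w)))))"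
  by (auto simp: rgf_def prefix_values_Cons)

lemma Rstar_eq_image_rg_tails:
  assumes "1 \<le> n"
  shows "Rstar n b = (#) 0 ` rg_tails b 0 (n - 1)"
proof -
  obtain k where n: "n = Suc k" using assms by (cases n) auto
  have "s \<in> Rstar (Suc k) b \<longleftrightarrow> s \<in> (#) 0 ` rg_tails b 0 k" for s
    by (cases s) (auto simp: Rstar_def R_def rg_tails_def rgf_Cons_iff rg_tail_iff rgf_def[of _ "[]"])
  then show ?thesis using n by auto
qed

text \<open>The reflected Gray code order on the sequences following a prefix whose sum has parity \<open>e\<close>
  (\<open>e = True\<close>: odd, so the order is reversed).\<close>

fun rgc_lt :: "bool \<Rightarrow> nat list \<Rightarrow> nat list \<Rightarrow> bool" where
  "rgc_lt e (x # u) (y # v) =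
     (if x = y then rgc_lt (e \<noteq> odd x) u v else if e then y < x else x < y)"
| "rgc_lt e _ _ = False"

lemma rgc_lt_iff:
  "length u = length v \<Longrightarrow> rgc_lt e u v \<longleftrightarrow>
     (\<exists>k < length u. take k u = take k v \<and> u ! k \<noteq> v ! k \<and>
        ((e = odd (sum_list (take k u)) \<and> u ! k < v ! k) \<or>
         (e \<noteq> odd (sum_list (take k u)) \<and> u ! k > v ! k)))"
proof (induction u v arbitrary: e rule: list_induct2)
  case (Cons x u y v)
  show ?case
    unfolding length_Cons Ex_less_Suc2 using Cons.IH[of "e \<noteq> odd x"] by auto
qed simp

lemma rgc_less_iff_rgc_lt: "length s = length t \<Longrightarrow> rgc_less s t \<longleftrightarrow> rgc_lt False s t"
  unfolding rgc_less_def by (auto simp: rgc_lt_iff)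

lemma rgc_lt_swap: "rgc_lt (\<not> e) u v \<longleftrightarrow> rgc_lt e v u"
  by (induction e u v rule: rgc_lt.induct) (auto elim: rgc_lt.elims)

fun first_tail :: "nat \<Rightarrow> nat \<Rightarrow> bool \<Rightarrow> nat \<Rightarrow> nat list" where
  "first_tail b m e 0 = []"
| "first_tail b m e (Suc r) =
     (if \<not> e \<and> b - m \<le> r then 0 # first_tail b m e r
      else if m < b then Suc m # first_tail b (Suc m) (e \<noteq> odd (Suc m)) r
      else b # first_tail b b (e \<noteq> odd b) r)"

lemma first_tail_mem: "m \<le> b \<Longrightarrow> b - m \<le> r \<Longrightarrow> first_tail b m e r \<in> rg_tails b m r"
  by (induction r arbitrary: m e) auto

lemma first_tail_least:
  "w \<in> rg_tails b m r \<Longrightarrow> w \<noteq> first_tail b m e r \<Longrightarrow> rgc_lt e (first_tail b m e r) w"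
proof (induction w arbitrary: m e r)
  case (Cons x w)
  then obtain r' where r: "r = Suc r'" and x: "x \<le> Suc m" and w: "w \<in> rg_tails b (max m x) r'"
    by (cases r) auto
  have bounds: "m \<le> b" "max m x \<le> b" "b - max m x \<le> r'"
    using rg_tails_bounds Cons.prems(1) w by blast+
  then consider "\<not> e \<and> b - m \<le> r'" | "e \<or> r' < b - m" "m < b" | e "m = b"
    by linarith
  then show ?case
  proof cases
    case 1
    then show ?thesis using Cons.IH[where m="max m x" and e=e] Cons.prems w r by auto
  next
    case 2
    then show ?thesis using Cons.IH[where m="max m x" and e="e \<noteq> odd (Suc m)"] Cons.prems w r x bounds
      by (auto simp: max_def split: if_splits)
  next
    case 3
    then show ?thesis using Cons.IH[where m="max m x" and e="e \<noteq> odd b"] Cons.prems w r x bounds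
      by (auto simp: max_def split: if_splits)
  qed
qed simp

lemma first_tail_tight: "m \<le> b \<Longrightarrow> first_tail b m e (b - m) = [Suc m..<Suc b]"
proof (induction "b - m" arbitrary: m e)
  case (Suc d)
  then have "m < b" "d = b - Suc m" by simp_all
  then show ?case
    using Suc.hyps(1)[of "Suc m"] by (simp add: Suc.hyps(2)[symmetric] upt_conv_Cons del: upt_Suc)
qed simp

lemma first_tail_False:
  "m \<le> b \<Longrightarrow> b - m \<le> r \<Longrightarrow> first_tail b m False r = replicate (r - (b - m)) 0 @ [Suc m..<Suc b]"
proof (induction r)
  case (Suc r)
  show ?case
  proof (cases "b - m \<le> r")
    case True
    then show ?thesis using Suc by (simp add: Suc_diff_le)
  next
    case False
    then have "Suc r = b - m" using Suc.prems by simp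
    then show ?thesis using first_tail_tight[OF Suc.prems(1)] by simp
  qed
qed (simp add: first_tail_tight)

fun hdist :: "nat list \<Rightarrow> nat list \<Rightarrow> nat" where
  "hdist (x # u) (y # v) = (if x = y then 0 else 1) + hdist u v"
| "hdist _ _ = 0"

lemma hdist_self [simp]: "hdist u u = 0"
  by (induction u) auto

lemma hdist_sym: "hdist u v = hdist v u"
  by (induction u v rule: hdist.induct) (auto elim: hdist.elims)

lemma hdist_append: "length u = length u' \<Longrightarrow> hdist (u @ v) (u' @ v') = hdist u u' + hdist v v'"
  by (induction u u' rule: list_induct2) auto

lemma hamming_eq_hdist: "length s = length t \<Longrightarrow> hamming s t = hdist s t"
proof (induction s t rule: list_induct2)
  case (Cons x s y t)
  have "{i. i < length (x # s) \<and> (x # s) ! i \<noteq> (y # t) ! i} =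
      (if x = y then {} else {0}) \<union> Suc ` {i. i < length s \<and> s ! i \<noteq> t ! i}"
    by (auto simp: less_Suc_eq_0_disj)
  then show ?case
    using Cons.IH by (simp add: hamming_def card_image)
qed (simp add: hamming_def)

lemma hdist_replicate_shift: "hdist (replicate z 0 @ [x]) (y # replicate z 0) \<le> 2"
proof (cases z)
  case (Suc n)
  then have "replicate z 0 @ [x] = [0] @ replicate n 0 @ [x]"
    and "y # replicate z 0 = [y] @ replicate n 0 @ [0]"
    by (simp_all add: replicate_append_same)
  then show ?thesis
    by (simp only: hdist_append length_replicate list.size hdist_self) simp
qed simp

lemma hdist_first_tail_False_Suc:
  assumes "m < b" "b - m \<le> r"
  shows "hdist (first_tail b m False r) (first_tail b (Suc m) False r) = 1"
proof -
  define z where "z = r - (b - m)"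
  have "first_tail b m False r = replicate z 0 @ Suc m # [Suc (Suc m)..<Suc b]"
    using first_tail_False[of m b r] assms unfolding z_def by (simp add: upt_conv_Cons)
  moreover have "first_tail b (Suc m) False r = replicate z 0 @ 0 # [Suc (Suc m)..<Suc b]"
    using first_tail_False[of "Suc m" b r] assms unfolding z_def
    by (simp add: replicate_app_Cons_same Suc_diff_le)
  ultimately show ?thesis by (simp add: hdist_append)
qed

lemma hdist_first_tail_True_Suc:
  assumes "odd b" "even m" "m < b" "b - m \<le> r"
  shows "hdist (first_tail b m True r) (first_tail b (Suc m) True r) \<le> 4"
proof -
  obtain r' where r: "r = Suc r'" using assms by (cases r) auto
  define z where "z = r' - (b - Suc m)"
  have A: "first_tail b m True r = Suc m # replicate z 0 @ [Suc (Suc m)..<Suc b]"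
    using first_tail_False[of "Suc m" b r'] assms r unfolding z_def by simp
  show ?thesis
  proof (cases "Suc m = b")
    case True
    then have "first_tail b (Suc m) True r = Suc m # replicate z 0"
      using first_tail_False[of b b r'] assms r unfolding z_def by simp
    then show ?thesis using A True by simp
  next
    case False
    \<comment> \<open>\<open>m + 2 \<noteq> b\<close> as \<open>b\<close> is odd\<close>
    with assms have m3: "Suc (Suc (Suc m)) \<le> b"
      by (metis Suc_lessI even_Suc le_eq_less_or_eq not_less_eq_eq)
    with assms r obtain r'' where r': "r' = Suc r''" by (cases r') auto
    define T where "T = [Suc (Suc (Suc (Suc m)))..<Suc b]"
    have "first_tail b m True r = [Suc m] @ (replicate z 0 @ [Suc (Suc m)]) @ [Suc (Suc (Suc m))] @ T"
      using A m3 unfolding T_def by (simp add: upt_conv_Cons)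
    moreover have "first_tail b (Suc m) True r =
        Suc (Suc m) # Suc (Suc (Suc m)) # first_tail b (Suc (Suc (Suc m))) False r''"
      using assms m3 r r' by simp
    then have "first_tail b (Suc m) True r = [Suc (Suc m)] @ (Suc (Suc (Suc m)) # replicate z 0) @ [0] @ T"
      using first_tail_False[of "Suc (Suc (Suc m))" b r''] m3 assms r r'
      unfolding z_def T_def by (simp add: replicate_append_same Suc_diff_le flip: replicate_Suc)
    ultimately have "hdist (first_tail b m True r) (first_tail b (Suc m) True r) =
        hdist [Suc m] [Suc (Suc m)] + hdist (replicate z 0 @ [Suc (Suc m)]) (Suc (Suc (Suc m)) # replicate z 0)
        + hdist [Suc (Suc (Suc m))] [0] + hdist T T"
      by (simp only: hdist_append length_append length_replicate list.size add_Suc_right add_0_right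
          add.assoc)
    then show ?thesis
      using hdist_replicate_shift[of z "Suc (Suc m)" "Suc (Suc (Suc m))"] by simp
  qed
qed

lemma hdist_first_tail_Suc:
  assumes "odd b" "m < b" "b - m \<le> r"
  shows "hdist (first_tail b m (odd (Suc m)) r) (first_tail b (Suc m) (odd (Suc m)) r) \<le> 4"
  using assms hdist_first_tail_False_Suc hdist_first_tail_True_Suc by (cases "odd m") auto

definition consecutive :: "'a set \<Rightarrow> ('a \<Rightarrow> 'a \<Rightarrow> bool) \<Rightarrow> 'a \<Rightarrow> 'a \<Rightarrow> bool" where
  "consecutive A lt u v \<longleftrightarrow> u \<in> A \<and> v \<in> A \<and> lt u v \<and> \<not> (\<exists>c \<in> A. lt u c \<and> lt c v)"

lemma consecutive_cong:
  "(\<And>a c. a \<in> A \<Longrightarrow> c \<in> A \<Longrightarrow> lt a c \<longleftrightarrow> lt' a c) \<Longrightarrow> consecutive A lt u v \<longleftrightarrow> consecutive A lt' u v"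
  unfolding consecutive_def by blast

lemma consecutive_subset:
  "consecutive B lt u v \<Longrightarrow> A \<subseteq> B \<Longrightarrow> u \<in> A \<Longrightarrow> v \<in> A \<Longrightarrow> consecutive A lt u v"
  unfolding consecutive_def by blast

lemma consecutive_Cons_image:
  "consecutive ((#) x ` A) (rgc_lt e) (x # u) (x # v) \<Longrightarrow> consecutive A (rgc_lt (e \<noteq> odd x)) u v"
  unfolding consecutive_def by auto

lemma consecutive_rgc_lt_swap: "consecutive A (rgc_lt (\<not> e)) v u \<longleftrightarrow> consecutive A (rgc_lt e) u v"
  unfolding consecutive_def rgc_lt_swap by blast

lemma consecutive_rg_tails_Cons:
  assumes "consecutive (rg_tails b m r) (rgc_lt e) (x # u) (x # v)"
  shows "consecutive (rg_tails b (max m x) (r - 1)) (rgc_lt (e \<noteq> odd x)) u v"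
proof (rule consecutive_Cons_image, rule consecutive_subset[OF assms])
  have "r \<noteq> 0 \<and> x \<le> Suc m" "u \<in> rg_tails b (max m x) (r - 1)" "v \<in> rg_tails b (max m x) (r - 1)"
    using assms by (auto simp: consecutive_def)
  then show "(#) x ` rg_tails b (max m x) (r - 1) \<subseteq> rg_tails b m r"
    and "x # u \<in> (#) x ` rg_tails b (max m x) (r - 1)" "x # v \<in> (#) x ` rg_tails b (max m x) (r - 1)"
    by auto
qed

lemma consecutive_rg_tails_heads:
  assumes cons: "consecutive (rg_tails b m r) (rgc_lt e) (x # u) (y # v)" and "x \<noteq> y"
  shows "if e then x = Suc y else y = Suc x"
proof (rule ccontr)
  assume not_adjacent: "\<not> ?thesis"
  have order: "if e then y < x else x < y"
    using cons \<open>x \<noteq> y\<close> by (simp add: consecutive_def)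
  define d where "d = Suc (min x y)"
  have "x \<le> Suc m" "y \<le> Suc m" "r \<noteq> 0"
    and tails: "u \<in> rg_tails b (max m x) (r - 1)" "v \<in> rg_tails b (max m y) (r - 1)"
    using cons by (auto simp: consecutive_def)
  with order not_adjacent have "d \<le> m" "m \<le> b" "b - m \<le> r - 1"
    using rg_tails_bounds[OF tails(1)] rg_tails_bounds[OF tails(2)]
    by (auto simp: d_def split: if_splits)
  then have "d # first_tail b m (e \<noteq> odd d) (r - 1) \<in> rg_tails b m r"
    using first_tail_mem \<open>r \<noteq> 0\<close> by (simp add: max_absorb1)
  moreover have "rgc_lt e (x # u) (d # first_tail b m (e \<noteq> odd d) (r - 1))"
    and "rgc_lt e (d # first_tail b m (e \<noteq> odd d) (r - 1)) (y # v)"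
    using order not_adjacent by (auto simp: d_def split: if_splits)
  ultimately show False
    using cons unfolding consecutive_def by blast
qed

lemma consecutive_rg_tails_right_tail:
  assumes cons: "consecutive (rg_tails b m r) (rgc_lt e) (x # u) (y # v)" and "x \<noteq> y"
  shows "v = first_tail b (max m y) (e \<noteq> odd y) (r - 1)"
proof (rule ccontr)
  let ?F = "first_tail b (max m y) (e \<noteq> odd y) (r - 1)"
  assume "v \<noteq> ?F"
  have "y \<le> Suc m" "r \<noteq> 0" and v: "v \<in> rg_tails b (max m y) (r - 1)"
    using cons by (auto simp: consecutive_def)
  then have "y # ?F \<in> rg_tails b m r"
    using first_tail_mem rg_tails_bounds[OF v] by simp
  moreover have "rgc_lt e (x # u) (y # ?F)"
    using cons \<open>x \<noteq> y\<close> by (simp add: consecutive_def)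
  moreover have "rgc_lt e (y # ?F) (y # v)"
    using first_tail_least[OF v \<open>v \<noteq> ?F\<close>] by simp
  ultimately show False
    using cons unfolding consecutive_def by blast
qed

lemma consecutive_rg_tails_left_tail:
  assumes "consecutive (rg_tails b m r) (rgc_lt e) (x # u) (y # v)" and "x \<noteq> y"
  shows "u = first_tail b (max m x) (e = odd x) (r - 1)"
  using consecutive_rg_tails_right_tail[of b m r "\<not> e" y v x u] assms
  by (simp add: consecutive_rgc_lt_swap)

lemma hdist_consecutive_rg_tails_distinct_heads:
  assumes "odd b" and cons: "consecutive (rg_tails b m r) (rgc_lt e) (x # u) (y # v)" and "x \<noteq> y"
  shows "hdist u v \<le> 4"
proof -
  have hdist_adjacent_heads: "hdist (first_tail b (max m a) (odd (Suc a)) (r - 1))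
      (first_tail b (max m (Suc a)) (odd (Suc a)) (r - 1)) \<le> 4"
    if "a \<le> m" "Suc a \<le> b" "b - max m a \<le> r - 1" for a
  proof (cases "a < m")
    case True
    then show ?thesis by (simp add: max_absorb1)
  next
    case False
    with that show ?thesis using hdist_first_tail_Suc[OF \<open>odd b\<close>] by simp
  qed
  have "x \<le> Suc m" "y \<le> Suc m"
    and tails: "u \<in> rg_tails b (max m x) (r - 1)" "v \<in> rg_tails b (max m y) (r - 1)"
    using cons by (auto simp: consecutive_def)
  then show ?thesis
    using rg_tails_bounds[OF tails(1)] rg_tails_bounds[OF tails(2)]
      consecutive_rg_tails_heads[OF cons \<open>x \<noteq> y\<close>]
      consecutive_rg_tails_left_tail[OF cons \<open>x \<noteq> y\<close>]
      consecutive_rg_tails_right_tail[OF cons \<open>x \<noteq> y\<close>]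
      hdist_adjacent_heads[of x] hdist_adjacent_heads[of y]
    by (auto simp: hdist_sym split: if_splits)
qed

lemma hdist_consecutive_rg_tails:
  assumes "odd b" and "consecutive (rg_tails b m r) (rgc_lt e) u v"
  shows "hdist u v \<le> 5"
  using assms(2)
proof (induction u arbitrary: v m e r)
  case Nil
  then show ?case by (simp add: consecutive_def)
next
  case (Cons x u)
  then obtain y v' where v: "v = y # v'"
    by (cases v) (auto simp: consecutive_def)
  show ?case
  proof (cases "x = y")
    case True
    then show ?thesis
      using Cons.IH[OF consecutive_rg_tails_Cons] Cons.prems v by simp
  next
    case False
    then show ?thesis
      using hdist_consecutive_rg_tails_distinct_heads[OF \<open>odd b\<close>] Cons.prems v by fastforce
  qed
qed

theorem theorem3:
  fixes b n :: nat and s t :: "nat list"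
  assumes "odd b" and "b \<ge> 1" and "n > b"
    and "s \<in> Rstar n b" and "t \<in> Rstar n b"
    and "rgc_less s t"
    and "\<not> (\<exists>u \<in> Rstar n b. rgc_less s u \<and> rgc_less u t)"
  shows "hamming s t \<le> 5"
proof -
  have Rstar: "Rstar n b = (#) 0 ` rg_tails b 0 (n - 1)"
    using Rstar_eq_image_rg_tails \<open>n > b\<close> by simp
  have "consecutive (Rstar n b) rgc_less s t"
    using assms(4-7) unfolding consecutive_def by blast
  moreover have same_length: "length a = length c" if "a \<in> Rstar n b" "c \<in> Rstar n b" for a c
    using that by (auto simp: Rstar rg_tails_def)
  ultimately have "consecutive (Rstar n b) (rgc_lt False) s t"
    using consecutive_cong[of "Rstar n b" rgc_less "rgc_lt False"] rgc_less_iff_rgc_lt by blast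
  moreover obtain ws wt where "s = 0 # ws" "t = 0 # wt"
    using assms(4,5) Rstar by blast
  ultimately have "consecutive (rg_tails b 0 (n - 1)) (rgc_lt False) ws wt"
    using consecutive_Cons_image[of 0 _ False ws wt] Rstar by simp
  then have "hdist ws wt \<le> 5"
    using hdist_consecutive_rg_tails \<open>odd b\<close> by blast
  then show ?thesis
    using \<open>s = 0 # ws\<close> \<open>t = 0 # wt\<close> same_length[OF assms(4,5)] hamming_eq_hdist by simp
qed

end
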